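(* Let $n$ be a positive integer, $\gamma\in\mathbb{F}_{2^n}\setminus\mathbb{F}_2$, and let $f$ be the function on $\mathbb{F}_{2^n}$ defined by $f(1)=\gamma^{-1}$, $f(\gamma)=1$, $f(0)=0$ and $f(x)=x^{-1}$ for $x\notin\{0,1,\gamma\}$. Let $C_n=\{\alpha^3:\alpha\in\mathbb{F}_{2^n}\setminus\mathbb{F}_4\}$. Then \[ \nabla_f=\begin{cases}8,&\text{if } [\,2\mid n \text{ and } \{\gamma^3+\gamma^2,\gamma+1\}\cap C_n\neq\emptyset\,] \text{ or } [\,3\mid n \text{ and } \gamma\in\mathbb{F}_8\setminus\mathbb{F}_2\,],\\ 4,&\text{otherwise.}\end{cases} \] In particular, if $n$ is odd and $3\nmid n$, then $\nabla_f=4$ for all $\gamma\in\mathbb{F}_{2^n}\setminus\mathbb{F}_2$.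
   Context: The function $f$ is the swapped inverse function $Inv\circ(1,\gamma)$ with $Inv(x)=x^{2^n-2}$ and $(1,\gamma)$ the transposition swapping $1$ and $\gamma$. For $a,b\in\mathbb{F}_{2^n}$, $\nabla_f(a,b)$ is the number of $x\in\mathbb{F}_{2^n}$ with $f(x+a+b)+f(x+a)+f(x+b)+f(x)=0$, and $\nabla_f=\max\{\nabla_f(a,b): a,b\in\mathbb{F}_{2^n}\setminus\{0\},\ a\neq b\}$. $\mathbb{F}_4,\mathbb{F}_8$ denote the intersections of $\mathbb{F}_{2^n}$ with the subfields of order $4$ and $8$; so $C_n$ is the set of nonzero cubes in $\mathbb{F}_{2^n}$ other than $1$. *)

theory Defs
  imports Main
begin

text \<open>The finite field F_{2^n} is modelled as a finite field type 'a with card UNIV = 2^n.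
  Intersections with subfields: F_2 = {x. x^2 = x}, F_4 = {x. x^4 = x}, F_8 = {x. x^8 = x}.\<close>

definition swapped_inv :: "'a::field \<Rightarrow> 'a \<Rightarrow> 'a" where
  "swapped_inv \<gamma> x = inverse (if x = 1 then \<gamma> else if x = \<gamma> then 1 else x)"

definition boomerang_count :: "('a::ring \<Rightarrow> 'a) \<Rightarrow> 'a \<Rightarrow> 'a \<Rightarrow> nat" where
  "boomerang_count f a b = card {x. f (x + a + b) + f (x + a) + f (x + b) + f x = 0}"

definition boomerang_uniformity :: "('a::ring \<Rightarrow> 'a) \<Rightarrow> nat" where
  "boomerang_uniformity f =
     Max {boomerang_count f a b | a b. a \<noteq> 0 \<and> b \<noteq> 0 \<and> a \<noteq> b}"

definition cubes_C :: "'a::field set" where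
  "cubes_C = {\<alpha> ^ 3 | \<alpha>. \<alpha> ^ 4 \<noteq> \<alpha>}"

end

theory Submission
  imports Defs "HOL-Computational_Algebra.Polynomial"
begin

text \<open>
  In characteristic two the solution set of \<open>f (x + a + b) + f (x + a) + f (x + b) + f x = 0\<close>
  is a union of cosets of the subgroup \<open>{0, a, b, a + b}\<close>, so every boomerang count is a
  multiple of 4. On a coset avoiding \<open>0\<close>, \<open>1\<close> and \<open>\<gamma>\<close> the swapped inverse is the inverse map,
  and there the equation collapses to \<open>a b (a + b) = 0\<close>; hence every coset of solutions contains
  one of \<open>0, 1, \<gamma>\<close>. Explicit computation shows that the cosets of \<open>0, 1, \<gamma>\<close> are never
  three distinct cosets of solutions, so the count is at most 8, and that two of \<open>0, 1, \<gamma>\<close> are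
  solutions in distinct cosets for some \<open>a, b\<close> exactly when \<open>\<gamma>\<close> is a root of \<open>x\<^sup>3 + x + 1\<close> or
  \<open>x\<^sup>3 + x\<^sup>2 + 1\<close>, or the field contains a primitive cube root of unity and \<open>\<gamma> + 1\<close> or
  \<open>\<gamma>\<^sup>3 + \<gamma>\<^sup>2\<close> is the cube of an element outside \<open>F\<^sub>4\<close>. Finally some solution set is nonempty:
  for even \<open>n\<close> by means of a cube root of unity, for odd \<open>n\<close> by means of the half-trace, which
  solves \<open>y\<^sup>2 + y = 1/\<gamma>\<close> or \<open>y\<^sup>2 + y = 1/\<gamma> + 1\<close>.
\<close>

section \<open>Finite fields of characteristic two\<close>

lemma finite_field_power_card:
  fixes x :: "'a::{field,finite}"
  shows "x ^ card (UNIV :: 'a set) = x"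
proof (cases "x = 0")
  case True
  then show ?thesis by (simp add: finite_UNIV_card_ge_0)
next
  case False
  let ?U = "UNIV - {0 :: 'a}"
  have "(\<Prod>y\<in>?U. x * y) = \<Prod>?U"
    by (rule prod.reindex_bij_witness[where i = "\<lambda>y. y / x" and j = "(*) x"]) (use False in auto)
  then have "x ^ card ?U * \<Prod>?U = 1 * \<Prod>?U"
    by (simp add: prod.distrib)
  then have "x ^ card ?U = 1"
    by (rule mult_right_cancel[THEN iffD1, rotated]) simp
  moreover have "card (UNIV :: 'a set) = Suc (card ?U)"
    using finite_UNIV_card_ge_0[where 'a = 'a] by (simp add: card_Diff_singleton)
  ultimately show ?thesis
    by (simp del: card_Diff_insert)
qed

lemma two_eq_zero_if_card_power_two:
  assumes "card (UNIV :: 'a::{field,finite} set) = 2 ^ n" "n > 0"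
  shows "(2::'a) = 0"
proof -
  have "(-1::'a) = (-1) ^ card (UNIV :: 'a set)"
    by (simp only: finite_field_power_card)
  also have "\<dots> = 1"
    using assms by simp
  finally show ?thesis
    by (metis add_eq_0_iff one_add_one)
qed

lemma power_eq_power_mod:
  fixes w :: "'a::monoid_mult"
  assumes "w ^ k = 1"
  shows "w ^ m = w ^ (m mod k)"
proof -
  have "w ^ m = (w ^ k) ^ (m div k) * w ^ (m mod k)"
    by (simp flip: power_mult power_add)
  with assms show ?thesis
    by simp
qed

lemma add_self_char_two: "(2::'a::ring_1) = 0 \<Longrightarrow> x + x = (0::'a)"
  by (metis mult_2 mult_zero_left)

lemma add_self_left_char_two: "(2::'a::ring_1) = 0 \<Longrightarrow> x + (x + y) = (y::'a)"
  by (metis add.assoc add_0 add_self_char_two)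

lemma add_eq_0_iff_char_two: "(2::'a::ring_1) = 0 \<Longrightarrow> x + y = 0 \<longleftrightarrow> x = (y::'a)"
  by (metis add_self_char_two add_self_left_char_two add_0_right)

lemma sum_power2_char_two:
  assumes "(2::'a::comm_ring_1) = 0"
  shows "(\<Sum>i<(k::nat). f i)^2 = (\<Sum>i<k. (f i)^2 :: 'a)"
proof (induction k)
  case (Suc k)
  then show ?case
    using assms by (simp add: power2_sum)
qed simp

lemma two_power_mod_3_if_odd:
  assumes "odd n"
  shows "(2::nat) ^ n mod 3 = 2"
proof -
  from assms obtain m where n: "n = 2 * m + 1"
    by (rule oddE)
  have "(4::nat) ^ m mod 3 = 1"
    using power_mod[of "4::nat" 3 m] by simp
  have "(2::nat) ^ n mod 3 = 2 * (4 ^ m mod 3) mod 3"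
    by (simp add: n power_mult mod_mult_right_eq)
  also have "\<dots> = 2"
    using \<open>4 ^ m mod 3 = 1\<close> by simp
  finally show ?thesis .
qed

lemma two_power_mod_7: "(2::nat) ^ n mod 7 = 2 ^ (n mod 3)"
proof -
  have "(2::nat) ^ (n mod 3) \<le> 2 ^ 2"
    by (rule power_increasing) linarith+
  then have small: "(2::nat) ^ (n mod 3) < 7"
    by simp
  have "(2::nat) ^ n = 2 ^ (n mod 3) * (2 ^ 3) ^ (n div 3)"
    unfolding power_mult[symmetric] power_add[symmetric] by simp
  then have "(2::nat) ^ n mod 7 = 2 ^ (n mod 3) * (8 ^ (n div 3) mod 7) mod 7"
    by (simp add: mod_mult_right_eq)
  also have "(8::nat) ^ (n div 3) mod 7 = 1"
    using power_mod[of "8::nat" 7 "n div 3"] by simp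
  finally show ?thesis
    using small by simp
qed

lemma even_if_cube_root_of_unity:
  fixes \<omega> :: "'a::{field,finite}"
  assumes "card (UNIV :: 'a set) = 2 ^ n" "n > 0" "\<omega>^2 + \<omega> + 1 = 0"
  shows "even n"
proof (rule ccontr)
  assume "odd n"
  have "\<omega>^3 = 1 + (\<omega> - 1) * (\<omega>^2 + \<omega> + 1)"
    by algebra
  then have "\<omega>^3 = 1"
    using assms(3) by simp
  have "\<omega> = \<omega> ^ 2 ^ n"
    using finite_field_power_card[of \<omega>] assms(1) by simp
  also have "\<dots> = \<omega> ^ (2 ^ n mod 3)"
    by (rule power_eq_power_mod[OF \<open>\<omega>^3 = 1\<close>])
  also have "\<dots> = \<omega>^2"
    using two_power_mod_3_if_odd[OF \<open>odd n\<close>] by simp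
  finally have "\<omega>^2 + \<omega> + 1 = 1"
    using add_self_char_two[OF two_eq_zero_if_card_power_two[OF assms(1,2)]] by simp
  then show False
    using assms(3) by simp
qed

lemma card_roots_of_unity_le:
  fixes A :: "'a::idom set"
  assumes "k > 0" "\<And>y. y \<in> A \<Longrightarrow> y ^ k = 1"
  shows "card A \<le> k"
proof -
  define p :: "'a poly" where "p = monom 1 k - 1"
  have p: "poly p y = y ^ k - 1" for y
    by (simp add: p_def poly_monom)
  have "p \<noteq> 0"
    using p[of 0] assms(1) by (auto simp: power_0_left)
  have "card A \<le> card {y. poly p y = 0}"
    using assms(2) p poly_roots_finite[OF \<open>p \<noteq> 0\<close>] by (intro card_mono) auto
  also have "\<dots> \<le> degree p"
    by (rule card_poly_roots_bound[OF \<open>p \<noteq> 0\<close>])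
  also have "\<dots> \<le> k"
    unfolding p_def by (rule degree_diff_le) (simp_all add: degree_monom_le)
  finally show ?thesis .
qed

lemma cube_root_of_unity_if_even:
  assumes "card (UNIV :: 'a::{field,finite} set) = 2 ^ n" "n > 0" "even n"
  shows "\<exists>\<omega>::'a. \<omega>^2 + \<omega> + 1 = 0"
proof (rule ccontr)
  assume no_root: "\<nexists>\<omega>::'a. \<omega>^2 + \<omega> + 1 = 0"
  obtain m where m: "n = 2 * m" "m > 0"
    using assms(2,3) by auto
  define k where "k = (4::nat) ^ m div 3"
  have "(4::nat) ^ m mod 3 = 1"
    using power_mod[of "4::nat" 3 m] by simp
  then have card: "card (UNIV :: 'a set) = Suc (3 * k)"
    using assms(1) m(1) div_mult_mod_eq[of "(4::nat) ^ m" 3] by (simp add: k_def power_mult)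
  have "(4::nat) \<le> 4 ^ m"
    using m(2) by (simp add: self_le_power)
  then have "k > 0"
    by (simp add: k_def)
  have "y ^ k = 1" if "y \<in> UNIV - {0}" for y :: 'a
  proof -
    have "y ^ Suc (3 * k) = y * 1"
      using finite_field_power_card[of y] card by simp
    then have "(y ^ k) ^ 3 = 1"
      using that by (simp add: power_mult[symmetric] mult.commute)
    moreover have "(y ^ k) ^ 3 - 1 = (y ^ k - 1) * ((y ^ k)^2 + y ^ k + 1)"
      by algebra
    ultimately show "y ^ k = 1"
      using no_root by auto
  qed
  then have "card (UNIV - {0::'a}) \<le> k"
    by (rule card_roots_of_unity_le[OF \<open>k > 0\<close>])
  then show False
    using card \<open>k > 0\<close> by (simp add: card_Diff_singleton)
qed

lemma three_dvd_if_mem_F8: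
  fixes \<gamma> :: "'a::{field,finite}"
  assumes "card (UNIV :: 'a set) = 2 ^ n" "\<gamma>^8 = \<gamma>" "\<gamma>^2 \<noteq> \<gamma>"
  shows "3 dvd n"
proof (rule ccontr)
  assume "\<not> 3 dvd n"
  then have "n mod 3 = 1 \<or> n mod 3 = 2"
    by presburger
  have "\<gamma> \<noteq> 0"
    using assms(3) by auto
  have "\<gamma> * \<gamma>^7 = \<gamma> * 1"
    using assms(2) by (simp add: power_numeral_reduce)
  then have "\<gamma>^7 = 1"
    using \<open>\<gamma> \<noteq> 0\<close> by simp
  have "\<gamma> = \<gamma> ^ 2 ^ n"
    using finite_field_power_card[of \<gamma>] assms(1) by simp
  also have "\<dots> = \<gamma> ^ 2 ^ (n mod 3)"
    using power_eq_power_mod[OF \<open>\<gamma>^7 = 1\<close>, of "2 ^ n"] two_power_mod_7 by simp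
  finally have "\<gamma> = \<gamma> ^ 2 ^ (n mod 3)" .
  from \<open>n mod 3 = 1 \<or> n mod 3 = 2\<close> show False
  proof
    assume "n mod 3 = 2"
    with \<open>\<gamma> = \<gamma> ^ 2 ^ (n mod 3)\<close> have "\<gamma> * \<gamma>^3 = \<gamma> * 1"
      by (simp add: power_numeral_reduce)
    then have "\<gamma>^3 = 1"
      using \<open>\<gamma> \<noteq> 0\<close> by simp
    then have "\<gamma>^7 = \<gamma>"
      using power_eq_power_mod[of \<gamma> 3 7] by simp
    then show False
      using \<open>\<gamma>^7 = 1\<close> assms(3) by simp
  qed (use assms(3) \<open>\<gamma> = \<gamma> ^ 2 ^ (n mod 3)\<close> in simp)
qed

text \<open>
  The half-trace \<open>\<Sum>i\<le>m. c ^ 4 ^ i\<close> solves \<open>y\<^sup>2 + y = c + Tr c\<close> when \<open>n = 2m + 1\<close>, and the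
  trace \<open>Tr c = \<Sum>i<n. c ^ 2 ^ i\<close> lies in \<open>F\<^sub>2\<close>.
\<close>

lemma half_trace_square_add:
  assumes "(2::'a::comm_ring_1) = 0"
  shows "(\<Sum>i<Suc m. c ^ 2 ^ (2 * i))^2 + (\<Sum>i<Suc m. c ^ 2 ^ (2 * i)) = (\<Sum>i<2 * Suc m. c ^ 2 ^ i :: 'a)"
proof (induction m)
  case 0
  then show ?case
    by (simp add: power2_eq_square numeral_2_eq_2 add.commute)
next
  case (Suc m)
  let ?H = "\<Sum>i<Suc m. c ^ 2 ^ (2 * i)"
  have square: "(c ^ 2 ^ i)^2 = c ^ 2 ^ Suc i" for i
    by (simp add: power_mult[symmetric] mult.commute)
  have step: "(?H + t)^2 + (?H + t) = (?H^2 + ?H) + t + t^2" for t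
    using assms by (simp add: power2_sum algebra_simps)
  have "(\<Sum>i<Suc (Suc m). c ^ 2 ^ (2 * i))^2 + (\<Sum>i<Suc (Suc m). c ^ 2 ^ (2 * i)) =
      (\<Sum>i<2 * Suc m. c ^ 2 ^ i) + c ^ 2 ^ (2 * Suc m) + c ^ 2 ^ Suc (2 * Suc m)"
    by (simp only: sum.lessThan_Suc[of _ "Suc m"] step square Suc.IH)
  also have "\<dots> = (\<Sum>i<Suc (Suc (2 * Suc m)). c ^ 2 ^ i)"
    by (simp only: sum.lessThan_Suc)
  also have "Suc (Suc (2 * Suc m)) = 2 * Suc (Suc m)"
    by simp
  finally show ?case .
qed

lemma trace_eq_0_or_1:
  fixes c :: "'a::{field,finite}"
  assumes "card (UNIV :: 'a set) = 2 ^ n" "n > 0"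
  shows "(\<Sum>i<n. c ^ 2 ^ i) \<in> {0, 1}"
proof -
  define T where "T = (\<Sum>i<n. c ^ 2 ^ i)"
  have "(\<Sum>i<n. c ^ 2 ^ Suc i) = (\<Sum>i<n. (c ^ 2 ^ i)^2)"
    by (simp add: power_mult[symmetric] mult.commute)
  then have "c + T^2 = (\<Sum>i<Suc n. c ^ 2 ^ i)"
    unfolding T_def sum_power2_char_two[OF two_eq_zero_if_card_power_two[OF assms]]
    by (simp only: sum.lessThan_Suc_shift) simp
  also have "\<dots> = T + c"
    using finite_field_power_card[of c] assms(1) by (simp add: T_def)
  finally have "T * T = T * 1"
    by (simp add: add.commute power2_eq_square)
  then show ?thesis
    unfolding T_def[symmetric] by (auto simp: mult_left_cancel)
qed

lemma artin_schreier_solvable_if_odd: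
  fixes c :: "'a::{field,finite}"
  assumes "card (UNIV :: 'a set) = 2 ^ n" "n > 0" "odd n"
  shows "\<exists>y. y^2 + y = c \<or> y^2 + y = c + 1"
proof -
  obtain m where n: "n = 2 * m + 1"
    using assms(3) by (rule oddE)
  let ?H = "\<Sum>i<Suc m. c ^ 2 ^ (2 * i)"
  have "?H^2 + ?H = (\<Sum>i<Suc n. c ^ 2 ^ i)"
    using half_trace_square_add[OF two_eq_zero_if_card_power_two[OF assms(1,2)]] n by simp
  also have "\<dots> = (\<Sum>i<n. c ^ 2 ^ i) + c"
    using finite_field_power_card[of c] assms(1) by simp
  finally show ?thesis
    using trace_eq_0_or_1[OF assms(1,2), of c] by (metis add.commute add_0 insertE singletonD)
qed

section \<open>Boomerang sets as unions of cosets\<close>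

definition span2 :: "'a::monoid_add \<Rightarrow> 'a \<Rightarrow> 'a set" where
  "span2 a b = {0, a, b, a + b}"

lemma finite_span2 [simp]: "finite (span2 a b)"
  by (simp add: span2_def)

lemma zero_mem_span2 [simp]: "0 \<in> span2 a b"
  by (simp add: span2_def)

definition boomerang_set :: "('a::ring \<Rightarrow> 'a) \<Rightarrow> 'a \<Rightarrow> 'a \<Rightarrow> 'a set" where
  "boomerang_set f a b = {x. f (x + a + b) + f (x + a) + f (x + b) + f x = 0}"

lemma boomerang_count_eq_card: "boomerang_count f a b = card (boomerang_set f a b)"
  by (simp add: boomerang_count_def boomerang_set_def)

lemma span2_swap: "span2 b a = span2 (a::'a::comm_monoid_add) b"
  by (auto simp: span2_def ac_simps)

lemma card_coset_span2_le: "card ((+) p ` span2 a b) \<le> 4"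
  by (rule order.trans[OF card_image_le]) (auto simp: span2_def card_insert_if)

lemma boomerang_set_swap: "boomerang_set f b a = boomerang_set f a b"
  by (simp add: boomerang_set_def ac_simps)

context
  fixes a b :: "'a::ring_1"
  assumes two_eq_zero: "(2::'a) = 0"
begin

lemma span2_add_closed: "v \<in> span2 a b \<Longrightarrow> w \<in> span2 a b \<Longrightarrow> v + w \<in> span2 a b"
  using add_self_char_two[OF two_eq_zero] add_self_left_char_two[OF two_eq_zero]
  by (auto simp: span2_def ac_simps)

lemma card_span2:
  assumes "a \<noteq> 0" "b \<noteq> 0" "a \<noteq> b"
  shows "card (span2 a b) = 4"
  using assms add_eq_0_iff_char_two[OF two_eq_zero, of a b] by (simp add: span2_def)

lemma mem_coset_span2_iff: "x \<in> (+) p ` span2 a b \<longleftrightarrow> x + p \<in> span2 a b"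
proof
  assume "x + p \<in> span2 a b"
  moreover have "x = p + (x + p)"
    using add_self_left_char_two[OF two_eq_zero] by (simp add: ac_simps)
  ultimately show "x \<in> (+) p ` span2 a b"
    by blast
qed (use add_self_left_char_two[OF two_eq_zero] in \<open>auto simp: ac_simps\<close>)

lemma coset_span2_eq:
  assumes "p + q \<in> span2 a b"
  shows "(+) p ` span2 a b = (+) q ` span2 a b"
proof -
  have same: "x + p \<in> span2 a b \<longleftrightarrow> x + q \<in> span2 a b" for x
  proof -
    have "x + q = (x + p) + (p + q)" "x + p = (x + q) + (p + q)"
      using add_self_left_char_two[OF two_eq_zero] by (simp_all add: ac_simps)
    then show ?thesis
      using assms span2_add_closed by metis
  qed
  show ?thesis
    by (rule set_eqI) (simp only: mem_coset_span2_iff same)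
qed

lemma card_coset_span2:
  assumes "a \<noteq> 0" "b \<noteq> 0" "a \<noteq> b"
  shows "card ((+) p ` span2 a b) = 4"
  using assms by (simp add: card_image card_span2)

lemma coset_span2_disjoint:
  assumes "p + q \<notin> span2 a b"
  shows "(+) p ` span2 a b \<inter> (+) q ` span2 a b = {}"
proof (rule ccontr)
  assume "(+) p ` span2 a b \<inter> (+) q ` span2 a b \<noteq> {}"
  then obtain v w where "v \<in> span2 a b" "w \<in> span2 a b" "p + v = q + w"
    by blast
  moreover from \<open>p + v = q + w\<close> have "p + q = v + w"
    by (metis add.assoc add.commute add_self_left_char_two[OF two_eq_zero])
  ultimately show False
    using assms span2_add_closed by metis
qed

lemma span2_add_right: "span2 a (a + b) = span2 a b"
  using add_self_left_char_two[OF two_eq_zero] by (auto simp: span2_def)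

lemma boomerang_set_add_right: "boomerang_set f a (a + b) = boomerang_set f a b"
  using add_self_left_char_two[OF two_eq_zero]
  by (simp add: boomerang_set_def add.assoc[symmetric]) (simp add: ac_simps)

lemma boomerang_set_add_span2:
  assumes "x \<in> boomerang_set f a b" "v \<in> span2 a b"
  shows "x + v \<in> boomerang_set f a b"
  using assms
  by (auto simp: boomerang_set_def span2_def ac_simps add_self_left_char_two[OF two_eq_zero])

lemma span2_normalize:
  assumes "a \<noteq> 0" "b \<noteq> 0" "a \<noteq> b" "c \<in> span2 a b" "c \<noteq> 0"
  obtains d where "d \<noteq> 0" "c \<noteq> d" "span2 c d = span2 a b"
    "boomerang_set f c d = boomerang_set f a b"
proof -
  consider "c = a" | "c = b" | "c = a + b"
    using assms(4,5) by (auto simp: span2_def)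
  then show thesis
  proof cases
    case 3
    have "a + b \<noteq> a"
      using assms(2) by simp
    then show thesis
      using that[of a] assms(1) 3
      by (metis span2_swap span2_add_right boomerang_set_swap boomerang_set_add_right)
  qed (use that assms in \<open>auto simp: span2_swap boomerang_set_swap\<close>)
qed

lemma coset_subset_boomerang_set:
  "x \<in> boomerang_set f a b \<Longrightarrow> (+) x ` span2 a b \<subseteq> boomerang_set f a b"
  using boomerang_set_add_span2 by blast

lemma card_boomerang_set_ge_4:
  assumes "finite (boomerang_set f a b)" "a \<noteq> 0" "b \<noteq> 0" "a \<noteq> b"
    and "p \<in> boomerang_set f a b"
  shows "4 \<le> card (boomerang_set f a b)"
  using card_mono[OF assms(1) coset_subset_boomerang_set[OF assms(5)]]
  by (simp add: card_coset_span2 assms(2-4))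

lemma card_boomerang_set_ge_8:
  assumes "finite (boomerang_set f a b)" "a \<noteq> 0" "b \<noteq> 0" "a \<noteq> b"
    and "p \<in> boomerang_set f a b" "q \<in> boomerang_set f a b" "p + q \<notin> span2 a b"
  shows "8 \<le> card (boomerang_set f a b)"
proof -
  have "card ((+) p ` span2 a b \<union> (+) q ` span2 a b) = 8"
    using assms(2-4,7) by (simp add: card_Un_disjoint coset_span2_disjoint card_coset_span2)
  moreover have "(+) p ` span2 a b \<union> (+) q ` span2 a b \<subseteq> boomerang_set f a b"
    using assms(5,6) coset_subset_boomerang_set by blast
  ultimately show ?thesis
    by (metis card_mono assms(1))
qed

end

section \<open>The swapped inverse in characteristic two\<close>

text \<open>
  The condition of the theorem without reference to \<open>n\<close>: the two cubics have as roots the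
  elements of \<open>F\<^sub>8 - F\<^sub>2\<close>, and a root of \<open>\<omega>\<^sup>2 + \<omega> + 1\<close> exists iff \<open>F\<^sub>4\<close> is a subfield.
\<close>

definition swapped_inv_exceptional :: "'a::field \<Rightarrow> bool" where
  "swapped_inv_exceptional \<gamma> \<longleftrightarrow>
     \<gamma>^3 + \<gamma> + 1 = 0 \<or> \<gamma>^3 + \<gamma>^2 + 1 = 0 \<or>
     ((\<exists>\<omega>::'a. \<omega>^2 + \<omega> + 1 = 0) \<and> (\<gamma> + 1 \<in> cubes_C \<or> \<gamma>^3 + \<gamma>^2 \<in> cubes_C))"

lemma cube_mem_cubes_C:
  assumes "a \<noteq> 0" "a^3 \<noteq> 1"
  shows "a^3 \<in> cubes_C"
proof -
  have "a^4 = a * a^3"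
    by (simp add: eval_nat_numeral)
  then have "a^4 \<noteq> a"
    using assms by auto
  then show ?thesis
    unfolding cubes_C_def by blast
qed

locale swapped_inverse =
  fixes \<gamma> :: "'a::field"
  assumes two_eq_zero: "(2::'a) = 0"
    and gamma_ne_0: "\<gamma> \<noteq> 0"
    and gamma_ne_1: "\<gamma> \<noteq> 1"
begin

abbreviation B :: "'a \<Rightarrow> 'a \<Rightarrow> 'a set" where
  "B \<equiv> boomerang_set (swapped_inv \<gamma>)"

lemma add_self [simp]: "x + x = (0::'a)"
  by (rule add_self_char_two[OF two_eq_zero])

lemma add_self_left [simp]: "x + (x + y) = (y::'a)"
  by (rule add_self_left_char_two[OF two_eq_zero])

lemma add_eq_0_iff [simp]: "x + y = 0 \<longleftrightarrow> x = (y::'a)"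
  by (rule add_eq_0_iff_char_two[OF two_eq_zero])

lemma add_eq_iff_eq_add: "x + y = z \<longleftrightarrow> y = x + (z::'a)"
  by auto

lemma numeral_Bit0_eq_0 [simp]: "(numeral (Num.Bit0 k) :: 'a) = 0"
  by (simp add: numeral_Bit0)

lemma numeral_Bit1_eq_1 [simp]: "(numeral (Num.Bit1 k) :: 'a) = 1"
  by (simp add: numeral_Bit1)

lemma eq_iff_eq_if_add_eq: "x + y = u + v \<Longrightarrow> (x = y) \<longleftrightarrow> (u = (v::'a))"
  by (metis add_eq_0_iff)

lemmas char_two_simps = algebra_simps power2_eq_square power3_eq_cube

declare gamma_ne_0 [simp] gamma_ne_1 [simp]

lemma gamma_neq [simp]: "1 \<noteq> \<gamma>" "\<gamma> + 1 \<noteq> 0" "1 + \<gamma> \<noteq> 0"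
  using gamma_ne_1 by auto

lemma gamma_square_neq [simp]: "\<gamma>^2 \<noteq> 0" "\<gamma>^2 \<noteq> \<gamma>" "\<gamma> \<noteq> \<gamma>^2" "\<gamma>^2 \<noteq> 1" "1 \<noteq> \<gamma>^2"
proof -
  show "\<gamma>^2 \<noteq> 0" "\<gamma>^2 \<noteq> \<gamma>" "\<gamma> \<noteq> \<gamma>^2"
    by (auto simp: power2_eq_square)
  have "(\<gamma> + 1)^2 = \<gamma>^2 + 1"
    by (simp add: char_two_simps)
  then show "\<gamma>^2 \<noteq> 1" "1 \<noteq> \<gamma>^2"
    by auto
qed


lemma F8_iff_cubic: "\<gamma>^8 = \<gamma> \<longleftrightarrow> \<gamma>^3 + \<gamma> + 1 = 0 \<or> \<gamma>^3 + \<gamma>^2 + 1 = 0"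
proof -
  have "\<gamma>^8 + \<gamma> = \<gamma> * (\<gamma> + 1) * ((\<gamma>^3 + \<gamma> + 1) * (\<gamma>^3 + \<gamma>^2 + 1))"
    by (simp add: char_two_simps power_numeral_reduce)
  then have "\<gamma>^8 = \<gamma> \<longleftrightarrow> (\<gamma>^3 + \<gamma> + 1) * (\<gamma>^3 + \<gamma>^2 + 1) = 0"
    by (metis add_eq_0_iff gamma_ne_0 gamma_neq(2) mult_eq_0_iff)
  then show ?thesis
    by simp
qed


lemma swapped_inv_0 [simp]: "swapped_inv \<gamma> 0 = 0"
  using gamma_ne_0 by (simp add: swapped_inv_def)

lemma swapped_inv_1 [simp]: "swapped_inv \<gamma> 1 = inverse \<gamma>"
  by (simp add: swapped_inv_def)

lemma swapped_inv_gamma [simp]: "swapped_inv \<gamma> \<gamma> = 1"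
  using gamma_ne_1 by (simp add: swapped_inv_def)

lemma swapped_inv_eq_inverse: "x \<notin> {1, \<gamma>} \<Longrightarrow> swapped_inv \<gamma> x = inverse x"
  by (simp add: swapped_inv_def)

text \<open>
  With \<open>Q = a\<^sup>2 + ab + b\<^sup>2\<close> and \<open>P = ab(a + b)\<close>, the other three points \<open>p + v\<close> of the coset have
  second and third elementary symmetric functions \<open>p\<^sup>2 + Q\<close> and \<open>p (p\<^sup>2 + Q) + P\<close>.
\<close>

lemma mem_boomerang_set_generic:
  assumes "p + a \<notin> {0, 1, \<gamma>}" "p + b \<notin> {0, 1, \<gamma>}" "p + (a + b) \<notin> {0, 1, \<gamma>}"
  shows "p \<in> B a b \<longleftrightarrow>
    swapped_inv \<gamma> p * (p * (p^2 + (a^2 + a*b + b^2)) + a*b*(a + b)) = p^2 + (a^2 + a*b + b^2)"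
proof -
  define y1 y2 y3 where "y1 = p + a" and "y2 = p + b" and "y3 = p + (a + b)"
  have nz: "y1 \<noteq> 0" "y2 \<noteq> 0" "y3 \<noteq> 0"
    using assms by (auto simp: y1_def y2_def y3_def)
  have "p \<in> B a b \<longleftrightarrow> swapped_inv \<gamma> p + (inverse y1 + inverse y2 + inverse y3) = 0"
    using assms by (simp add: boomerang_set_def swapped_inv_eq_inverse y1_def y2_def y3_def ac_simps)
  also have "inverse y1 + inverse y2 + inverse y3 = (y1*y2 + y1*y3 + y2*y3) / (y1*y2*y3)"
    using nz by (simp add: field_simps)
  also have "swapped_inv \<gamma> p + \<dots> = 0 \<longleftrightarrow> swapped_inv \<gamma> p * (y1*y2*y3) = y1*y2 + y1*y3 + y2*y3"
    using nz by (simp add: eq_divide_eq)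
  also have "y1*y2*y3 = p * (p^2 + (a^2 + a*b + b^2)) + a*b*(a + b)"
    by (simp add: y1_def y2_def y3_def char_two_simps)
  also have "y1*y2 + y1*y3 + y2*y3 = p^2 + (a^2 + a*b + b^2)"
    by (simp add: y1_def y2_def y3_def char_two_simps)
  finally show ?thesis .
qed

lemma mem_boomerang_set_two_generic:
  assumes "p + b \<notin> {0, 1, \<gamma>}" "p + (a + b) \<notin> {0, 1, \<gamma>}"
  shows "p \<in> B a b \<longleftrightarrow>
    (swapped_inv \<gamma> p + swapped_inv \<gamma> (p + a)) * ((p + b) * (p + (a + b))) = a"
proof -
  have nz: "p + b \<noteq> 0" "p + (a + b) \<noteq> 0"
    using assms by auto
  have "p \<in> B a b \<longleftrightarrow>
      swapped_inv \<gamma> p + swapped_inv \<gamma> (p + a) + (inverse (p + b) + inverse (p + (a + b))) = 0"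
    using assms by (simp add: boomerang_set_def swapped_inv_eq_inverse ac_simps)
  also have "inverse (p + b) + inverse (p + (a + b)) = a / ((p + b) * (p + (a + b)))"
    using nz by (simp add: field_simps char_two_simps)
  also have "swapped_inv \<gamma> p + swapped_inv \<gamma> (p + a) + \<dots> = 0 \<longleftrightarrow>
      (swapped_inv \<gamma> p + swapped_inv \<gamma> (p + a)) * ((p + b) * (p + (a + b))) = a"
    using nz by (simp add: eq_divide_eq)
  finally show ?thesis .
qed

lemma boomerang_set_coset_meets_special:
  assumes "a \<noteq> 0" "b \<noteq> 0" "a \<noteq> b" "x \<in> B a b"
  shows "\<exists>r\<in>{0, 1, \<gamma>}. x + r \<in> span2 a b"
proof (rule ccontr)
  assume "\<not> ?thesis"
  then have generic: "x + v \<notin> {0, 1, \<gamma>}" if "v \<in> span2 a b" for v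
    using that by (auto simp: add_eq_iff_eq_add)
  have "x \<notin> {0, 1, \<gamma>}"
    using generic[of 0] by (simp add: span2_def)
  then have "inverse x * (x * (x^2 + (a^2 + a*b + b^2)) + a*b*(a + b)) = x^2 + (a^2 + a*b + b^2)"
    using assms(4) generic by (simp add: mem_boomerang_set_generic span2_def swapped_inv_eq_inverse)
  then have "a*b*(a + b) / x = 0"
    using \<open>x \<notin> {0, 1, \<gamma>}\<close> by (simp add: field_simps)
  moreover have "a + b \<noteq> 0"
    using assms(3) by simp
  ultimately show False
    using assms(1,2) \<open>x \<notin> {0, 1, \<gamma>}\<close> by simp
qed

lemma zero_mem_boomerang_set_iff:
  assumes "a \<noteq> 0" "b \<noteq> 0" "a \<noteq> b" "1 \<notin> span2 a b" "\<gamma> \<notin> span2 a b"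
  shows "0 \<in> B a b \<longleftrightarrow> a^2 + a*b + b^2 = 0"
  using assms by (subst mem_boomerang_set_generic) (auto simp: span2_def)

lemma one_mem_boomerang_set_iff:
  assumes "a \<noteq> 0" "b \<noteq> 0" "a \<noteq> b" "1 \<notin> span2 a b" "1 + \<gamma> \<notin> span2 a b"
  shows "1 \<in> B a b \<longleftrightarrow> a*b*(a + b) = (\<gamma> + 1) * (1 + (a^2 + a*b + b^2))"
proof -
  have "1 \<in> B a b \<longleftrightarrow>
      inverse \<gamma> * (1 + (a^2 + a*b + b^2) + a*b*(a + b)) = 1 + (a^2 + a*b + b^2)"
    using assms by (subst mem_boomerang_set_generic) (auto simp: span2_def add_eq_iff_eq_add ac_simps)
  also have "\<dots> \<longleftrightarrow> 1 + (a^2 + a*b + b^2) + a*b*(a + b) = \<gamma> * (1 + (a^2 + a*b + b^2))"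
    using gamma_ne_0 by (auto simp: field_simps)
  also have "\<dots> \<longleftrightarrow> a*b*(a + b) = (\<gamma> + 1) * (1 + (a^2 + a*b + b^2))"
    by (rule eq_iff_eq_if_add_eq) (simp add: char_two_simps)
  finally show ?thesis .
qed

lemma gamma_mem_boomerang_set_iff:
  assumes "a \<noteq> 0" "b \<noteq> 0" "a \<noteq> b" "\<gamma> \<notin> span2 a b" "1 + \<gamma> \<notin> span2 a b"
  shows "\<gamma> \<in> B a b \<longleftrightarrow> a*b*(a + b) = (\<gamma> + 1) * (\<gamma>^2 + (a^2 + a*b + b^2))"
proof -
  have "\<gamma> \<in> B a b \<longleftrightarrow>
      \<gamma> * (\<gamma>^2 + (a^2 + a*b + b^2)) + a*b*(a + b) = \<gamma>^2 + (a^2 + a*b + b^2)"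
    using assms by (subst mem_boomerang_set_generic) (auto simp: span2_def add_eq_iff_eq_add ac_simps)
  also have "\<dots> \<longleftrightarrow> a*b*(a + b) = (\<gamma> + 1) * (\<gamma>^2 + (a^2 + a*b + b^2))"
    by (rule eq_iff_eq_if_add_eq) (simp add: char_two_simps)
  finally show ?thesis .
qed

lemma zero_mem_boomerang_set_one_iff:
  assumes "b \<noteq> 0" "b \<noteq> 1" "\<gamma> \<notin> span2 1 b"
  shows "0 \<in> B 1 b \<longleftrightarrow> b^2 + b = \<gamma>"
proof -
  have "0 \<in> B 1 b \<longleftrightarrow> inverse \<gamma> * (b * (1 + b)) = 1"
    using assms by (subst mem_boomerang_set_two_generic) (auto simp: span2_def add_eq_iff_eq_add ac_simps)
  also have "\<dots> \<longleftrightarrow> b^2 + b = \<gamma>"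
    using gamma_ne_0 by (auto simp: field_simps power2_eq_square)
  finally show ?thesis .
qed

lemma gamma_mem_boomerang_set_one_iff:
  assumes "b \<noteq> 0" "b \<noteq> 1" "\<gamma> \<notin> span2 1 b"
  shows "\<gamma> \<in> B 1 b \<longleftrightarrow> \<gamma> * ((\<gamma> + b)^2 + (\<gamma> + b)) = \<gamma> + 1"
proof -
  have "swapped_inv \<gamma> (\<gamma> + 1) = inverse (\<gamma> + 1)"
    using gamma_ne_0 by (simp add: swapped_inv_eq_inverse add_eq_iff_eq_add)
  then have "\<gamma> \<in> B 1 b \<longleftrightarrow> (1 + inverse (\<gamma> + 1)) * ((\<gamma> + b) * (\<gamma> + (1 + b))) = 1"
    using assms by (subst mem_boomerang_set_two_generic) (auto simp: span2_def add_eq_iff_eq_add ac_simps)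
  also have "1 + inverse (\<gamma> + 1) = \<gamma> / (\<gamma> + 1)"
    by (simp add: field_simps)
  also have "\<gamma> / (\<gamma> + 1) * ((\<gamma> + b) * (\<gamma> + (1 + b))) = 1 \<longleftrightarrow>
      \<gamma> * ((\<gamma> + b) * (\<gamma> + (1 + b))) = \<gamma> + 1"
    by (simp add: field_simps)
  also have "(\<gamma> + b) * (\<gamma> + (1 + b)) = (\<gamma> + b)^2 + (\<gamma> + b)"
    by (simp add: char_two_simps)
  finally show ?thesis .
qed

lemma zero_mem_boomerang_set_gamma_iff:
  assumes "b \<noteq> 0" "b \<noteq> \<gamma>" "1 \<notin> span2 \<gamma> b"
  shows "0 \<in> B \<gamma> b \<longleftrightarrow> b^2 + \<gamma> * b = \<gamma>"
proof -
  have "0 \<in> B \<gamma> b \<longleftrightarrow> b * (\<gamma> + b) = \<gamma>"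
    using assms by (subst mem_boomerang_set_two_generic) (auto simp: span2_def add_eq_iff_eq_add ac_simps)
  also have "b * (\<gamma> + b) = b^2 + \<gamma> * b"
    by (simp add: char_two_simps)
  finally show ?thesis .
qed

lemma one_mem_boomerang_set_gamma_iff:
  assumes "b \<noteq> 0" "b \<noteq> \<gamma>" "1 \<notin> span2 \<gamma> b"
  shows "1 \<in> B \<gamma> b \<longleftrightarrow> (1 + b)^2 + \<gamma> * (1 + b) = \<gamma>^2 * (\<gamma> + 1)"
proof -
  have "swapped_inv \<gamma> (1 + \<gamma>) = inverse (1 + \<gamma>)"
    using gamma_ne_0 by (simp add: swapped_inv_eq_inverse add_eq_iff_eq_add)
  then have "1 \<in> B \<gamma> b \<longleftrightarrow>
      (inverse \<gamma> + inverse (1 + \<gamma>)) * ((1 + b) * (1 + (\<gamma> + b))) = \<gamma>"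
    using assms by (subst mem_boomerang_set_two_generic) (auto simp: span2_def add_eq_iff_eq_add ac_simps)
  also have "inverse \<gamma> + inverse (1 + \<gamma>) = 1 / (\<gamma> * (1 + \<gamma>))"
    using gamma_ne_0 by (simp add: field_simps)
  also have "1 / (\<gamma> * (1 + \<gamma>)) * ((1 + b) * (1 + (\<gamma> + b))) = \<gamma> \<longleftrightarrow>
      (1 + b) * (1 + (\<gamma> + b)) = \<gamma>^2 * (\<gamma> + 1)"
    using gamma_ne_0 by (simp add: field_simps power2_eq_square)
  also have "(1 + b) * (1 + (\<gamma> + b)) = (1 + b)^2 + \<gamma> * (1 + b)"
    by (simp add: char_two_simps)
  finally show ?thesis .
qed

lemma one_not_mem_boomerang_set_one_add_gamma:
  assumes "b \<noteq> 0" "b \<noteq> 1 + \<gamma>" "1 \<notin> span2 (1 + \<gamma>) b"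
  shows "1 \<notin> B (1 + \<gamma>) b"
proof
  assume "1 \<in> B (1 + \<gamma>) b"
  then have "(inverse \<gamma> + 1) * ((1 + b) * (\<gamma> + b)) = 1 + \<gamma>"
    using assms by (subst (asm) mem_boomerang_set_two_generic) (auto simp: span2_def add_eq_iff_eq_add ac_simps)
  moreover have "inverse \<gamma> + 1 = (1 + \<gamma>) / \<gamma>"
    using gamma_ne_0 by (simp add: field_simps)
  ultimately have "(1 + \<gamma>) / \<gamma> * ((1 + b) * (\<gamma> + b)) = (1 + \<gamma>) / \<gamma> * \<gamma>"
    by simp
  then have "(1 + b) * (\<gamma> + b) = \<gamma>"
    by (subst (asm) mult_left_cancel) auto
  then have "b * (b + (1 + \<gamma>)) = 0"
    by (simp add: char_two_simps)
  then show False
    using assms(1,2) by auto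
qed

lemma exceptional_if_cube_eq:
  assumes "a \<noteq> 0" "a^2 + a*b + b^2 = 0" "a*b*(a + b) \<in> {\<gamma> + 1, \<gamma>^3 + \<gamma>^2}"
  shows "swapped_inv_exceptional \<gamma>"
proof -
  have "(b / a)^2 + b / a + 1 = (a^2 + a*b + b^2) / a^2"
    using assms(1) by (simp add: field_simps power2_eq_square)
  then have root: "\<exists>\<omega>::'a. \<omega>^2 + \<omega> + 1 = 0"
    using assms(2) by auto
  have "a^3 = a * (a^2 + a*b + b^2) + a*b*(a + b)"
    by (simp add: char_two_simps)
  then have cube: "a^3 \<in> {\<gamma> + 1, \<gamma>^3 + \<gamma>^2}"
    using assms(2,3) by simp
  show ?thesis
  proof (cases "a^3 = 1")
    case True
    then have "\<gamma>^3 + \<gamma>^2 = 1"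
      using cube by auto
    then have "\<gamma>^3 + \<gamma>^2 + 1 = 0"
      by simp
    then show ?thesis
      by (simp add: swapped_inv_exceptional_def)
  next
    case False
    then show ?thesis
      using cube root cube_mem_cubes_C[OF assms(1)] by (auto simp: swapped_inv_exceptional_def)
  qed
qed

lemma special_cosets_not_distinct:
  assumes "a \<noteq> 0" "b \<noteq> 0" "a \<noteq> b" "1 \<in> B a b" "\<gamma> \<in> B a b"
  shows "1 \<in> span2 a b \<or> \<gamma> \<in> span2 a b \<or> 1 + \<gamma> \<in> span2 a b"
proof (rule ccontr)
  assume "\<not> ?thesis"
  then have "(\<gamma> + 1) * (1 + (a^2 + a*b + b^2)) = (\<gamma> + 1) * (\<gamma>^2 + (a^2 + a*b + b^2))"
    using assms one_mem_boomerang_set_iff gamma_mem_boomerang_set_iff by auto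
  then have "\<gamma>^2 = 1"
    by simp
  moreover have "(\<gamma> + 1)^2 = \<gamma>^2 + 1"
    by (simp add: char_two_simps)
  ultimately show False
    by simp
qed

lemma one_not_mem_if_one_add_gamma_mem:
  assumes "a \<noteq> 0" "b \<noteq> 0" "a \<noteq> b" "1 + \<gamma> \<in> span2 a b" "1 \<notin> span2 a b"
  shows "1 \<notin> B a b"
proof -
  obtain d where "d \<noteq> 0" "1 + \<gamma> \<noteq> d" "span2 (1 + \<gamma>) d = span2 a b"
    "B (1 + \<gamma>) d = B a b"
    using span2_normalize[OF two_eq_zero assms(1-4)] by auto
  then show ?thesis
    using one_not_mem_boomerang_set_one_add_gamma assms(5) by metis
qed

lemma exceptional_if_zero_one_separated:
  assumes "a \<noteq> 0" "b \<noteq> 0" "a \<noteq> b" "0 \<in> B a b" "1 \<in> B a b" "1 \<notin> span2 a b"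
  shows "swapped_inv_exceptional \<gamma>"
proof -
  have "1 + \<gamma> \<notin> span2 a b"
    using assms one_not_mem_if_one_add_gamma_mem by blast
  show ?thesis
  proof (cases "\<gamma> \<in> span2 a b")
    case True
    then obtain d where d: "d \<noteq> 0" "\<gamma> \<noteq> d" "span2 \<gamma> d = span2 a b" "B \<gamma> d = B a b"
      using span2_normalize[OF two_eq_zero assms(1-3) True gamma_ne_0] by blast
    then have "d^2 + \<gamma> * d = \<gamma>" "(1 + d)^2 + \<gamma> * (1 + d) = \<gamma>^2 * (\<gamma> + 1)"
      using assms(4-6) zero_mem_boomerang_set_gamma_iff one_mem_boomerang_set_gamma_iff by auto
    then have "\<gamma>^3 + \<gamma>^2 + 1 = 0"
      by (simp add: char_two_simps)
    then show ?thesis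
      by (simp add: swapped_inv_exceptional_def)
  next
    case False
    then have "a^2 + a*b + b^2 = 0" "a*b*(a + b) = \<gamma> + 1"
      using assms \<open>1 + \<gamma> \<notin> span2 a b\<close> zero_mem_boomerang_set_iff one_mem_boomerang_set_iff
      by auto
    then show ?thesis
      using exceptional_if_cube_eq assms(1) by simp
  qed
qed

lemma one_add_gamma_not_mem_span2:
  assumes "a \<noteq> 0" "b \<noteq> 0" "a \<noteq> b" "\<gamma> \<in> B a b" "\<gamma> \<notin> span2 a b"
  shows "1 + \<gamma> \<notin> span2 a b"
proof
  assume in_span: "1 + \<gamma> \<in> span2 a b"
  then have "1 \<notin> span2 a b"
    using assms(5) span2_add_closed[OF two_eq_zero] by fastforce
  moreover have "1 \<in> B a b"
    using boomerang_set_add_span2[OF two_eq_zero assms(4) in_span] by simp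
  ultimately show False
    using assms(1-3) in_span one_not_mem_if_one_add_gamma_mem by blast
qed

lemma exceptional_if_zero_gamma_separated:
  assumes "a \<noteq> 0" "b \<noteq> 0" "a \<noteq> b" "0 \<in> B a b" "\<gamma> \<in> B a b" "\<gamma> \<notin> span2 a b"
  shows "swapped_inv_exceptional \<gamma>"
proof (cases "1 \<in> span2 a b")
  case True
  then obtain d where d: "d \<noteq> 0" "1 \<noteq> d" "span2 1 d = span2 a b" "B 1 d = B a b"
    using span2_normalize[OF two_eq_zero assms(1-3) True one_neq_zero] by blast
  then have "d^2 + d = \<gamma>" "\<gamma> * ((\<gamma> + d)^2 + (\<gamma> + d)) = \<gamma> + 1"
    using assms(4-6) zero_mem_boomerang_set_one_iff gamma_mem_boomerang_set_one_iff by auto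
  moreover have "\<gamma> * ((\<gamma> + d)^2 + (\<gamma> + d)) = \<gamma>^3 + \<gamma> * (\<gamma> + (d^2 + d))"
    by (simp add: char_two_simps)
  ultimately have "\<gamma>^3 = \<gamma> + 1"
    by simp
  then have "\<gamma>^3 + \<gamma> + 1 = 0"
    by (simp add: char_two_simps)
  then show ?thesis
    by (simp add: swapped_inv_exceptional_def)
next
  case False
  moreover have "1 + \<gamma> \<notin> span2 a b"
    using one_add_gamma_not_mem_span2[OF assms(1-3,5,6)] .
  ultimately have "a^2 + a*b + b^2 = 0" "a*b*(a + b) = (\<gamma> + 1) * \<gamma>^2"
    using assms zero_mem_boomerang_set_iff gamma_mem_boomerang_set_iff by auto
  moreover have "(\<gamma> + 1) * \<gamma>^2 = \<gamma>^3 + \<gamma>^2"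
    by (simp add: char_two_simps)
  ultimately show ?thesis
    using exceptional_if_cube_eq[OF assms(1)] by (metis insertI1 insertI2 singletonI)
qed
lemma exceptional_if_one_gamma_separated:
  assumes "a \<noteq> 0" "b \<noteq> 0" "a \<noteq> b" "1 \<in> B a b" "\<gamma> \<in> B a b" "1 + \<gamma> \<notin> span2 a b"
  shows "swapped_inv_exceptional \<gamma>"
proof -
  consider (one) "1 \<in> span2 a b" | (gamma) "\<gamma> \<in> span2 a b" | (neither) "1 \<notin> span2 a b" "\<gamma> \<notin> span2 a b"
    by blast
  then show ?thesis
  proof cases
    case one
    have "0 \<in> B a b"
      using boomerang_set_add_span2[OF two_eq_zero assms(4) one] by simp
    moreover have "\<gamma> \<notin> span2 a b"
      using one assms(6) span2_add_closed[OF two_eq_zero] by blast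
    ultimately show ?thesis
      using assms(1-3,5) exceptional_if_zero_gamma_separated by blast
  next
    case gamma
    have "0 \<in> B a b"
      using boomerang_set_add_span2[OF two_eq_zero assms(5) gamma] by simp
    moreover have "1 \<notin> span2 a b"
      using gamma assms(6) span2_add_closed[OF two_eq_zero] by blast
    ultimately show ?thesis
      using assms(1-4) exceptional_if_zero_one_separated by blast
  next
    case neither
    then show ?thesis
      using assms special_cosets_not_distinct by blast
  qed
qed

lemma exceptional_if_separated:
  assumes "a \<noteq> 0" "b \<noteq> 0" "a \<noteq> b" "r \<in> {0, 1, \<gamma>}" "s \<in> {0, 1, \<gamma>}"
    and "r \<in> B a b" "s \<in> B a b" "r + s \<notin> span2 a b"
  shows "swapped_inv_exceptional \<gamma>"
proof -
  have "r \<noteq> s"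
    using assms(8) by auto
  then consider "{r, s} = {0, 1}" | "{r, s} = {0, \<gamma>}" | "{r, s} = {1, \<gamma>}"
    using assms(4,5) by auto
  then show ?thesis
  proof cases
    case 1
    then have "0 \<in> B a b" "1 \<in> B a b" "1 \<notin> span2 a b"
      using assms(6-8) by (auto simp: doubleton_eq_iff)
    then show ?thesis
      using assms(1-3) exceptional_if_zero_one_separated by blast
  next
    case 2
    then have "0 \<in> B a b" "\<gamma> \<in> B a b" "\<gamma> \<notin> span2 a b"
      using assms(6-8) by (auto simp: doubleton_eq_iff)
    then show ?thesis
      using assms(1-3) exceptional_if_zero_gamma_separated by blast
  next
    case 3
    then have "1 \<in> B a b" "\<gamma> \<in> B a b" "1 + \<gamma> \<notin> span2 a b"
      using assms(6-8) by (auto simp: doubleton_eq_iff add.commute)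
    then show ?thesis
      using assms(1-3) exceptional_if_one_gamma_separated by blast
  qed
qed

lemma boomerang_set_mem_special_coset:
  assumes "a \<noteq> 0" "b \<noteq> 0" "a \<noteq> b" "x \<in> B a b"
  obtains r where "r \<in> {0, 1, \<gamma>}" "r \<in> B a b" "x \<in> (+) r ` span2 a b"
proof -
  obtain r where r: "r \<in> {0, 1, \<gamma>}" "x + r \<in> span2 a b"
    using assms boomerang_set_coset_meets_special by blast
  have "r \<in> B a b"
    using boomerang_set_add_span2[OF two_eq_zero assms(4) r(2)] by simp
  moreover have "x \<in> (+) r ` span2 a b"
    using r(2) by (simp only: mem_coset_span2_iff[OF two_eq_zero])
  ultimately show thesis
    using that r(1) by blast
qed

lemma boomerang_set_subset_cosets:
  assumes "a \<noteq> 0" "b \<noteq> 0" "a \<noteq> b"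
    and "\<And>r. r \<in> {0, 1, \<gamma>} \<Longrightarrow> r \<in> B a b \<Longrightarrow>
      (+) r ` span2 a b = (+) p ` span2 a b \<or> (+) r ` span2 a b = (+) q ` span2 a b"
  shows "B a b \<subseteq> (+) p ` span2 a b \<union> (+) q ` span2 a b"
proof
  fix x
  assume "x \<in> B a b"
  then obtain r where "r \<in> {0, 1, \<gamma>}" "r \<in> B a b" "x \<in> (+) r ` span2 a b"
    using assms(1-3) boomerang_set_mem_special_coset by blast
  then show "x \<in> (+) p ` span2 a b \<union> (+) q ` span2 a b"
    using assms(4) by (metis UnI1 UnI2)
qed

lemma boomerang_set_subset_two_cosets:
  assumes "a \<noteq> 0" "b \<noteq> 0" "a \<noteq> b"
  obtains p q where "B a b \<subseteq> (+) p ` span2 a b \<union> (+) q ` span2 a b"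
proof (cases "1 \<in> B a b \<and> \<gamma> \<in> B a b")
  case True
  let ?C = "\<lambda>r. (+) r ` span2 a b"
  note cover = boomerang_set_subset_cosets[OF assms]
  consider "1 \<in> span2 a b" | "\<gamma> \<in> span2 a b" | "\<gamma> + 1 \<in> span2 a b"
    using assms True special_cosets_not_distinct by (auto simp: add.commute)
  then show thesis
  proof cases
    case 1
    then have "?C 1 = ?C 0"
      by (intro coset_span2_eq[OF two_eq_zero]) simp
    then show thesis
      by (intro that[OF cover[of 0 \<gamma>]]) auto
  next
    case 2
    then have "?C \<gamma> = ?C 0"
      by (intro coset_span2_eq[OF two_eq_zero]) simp
    then show thesis
      by (intro that[OF cover[of 0 1]]) auto
  next
    case 3
    then have "?C \<gamma> = ?C 1"
      by (intro coset_span2_eq[OF two_eq_zero])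
    then show thesis
      by (intro that[OF cover[of 0 1]]) auto
  qed
next
  case False
  then show thesis
    by (metis that boomerang_set_subset_cosets[OF assms] insertE singletonD)
qed

lemma boomerang_set_subset_coset:
  assumes "a \<noteq> 0" "b \<noteq> 0" "a \<noteq> b" "\<not> swapped_inv_exceptional \<gamma>"
  obtains p where "B a b \<subseteq> (+) p ` span2 a b"
proof -
  obtain p where p: "\<And>r. r \<in> {0, 1, \<gamma>} \<Longrightarrow> r \<in> B a b \<Longrightarrow> r + p \<in> span2 a b"
  proof (cases "\<exists>p \<in> {0, 1, \<gamma>}. p \<in> B a b")
    case True
    then obtain p where "p \<in> {0, 1, \<gamma>}" "p \<in> B a b"
      by blast
    then show thesis
      using that exceptional_if_separated[OF assms(1-3)] assms(4) by metis
  qed (use that in blast)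
  have "B a b \<subseteq> (+) p ` span2 a b \<union> (+) p ` span2 a b"
  proof (rule boomerang_set_subset_cosets[OF assms(1-3)])
    fix r
    assume "r \<in> {0, 1, \<gamma>}" "r \<in> B a b"
    then show "(+) r ` span2 a b = (+) p ` span2 a b \<or> (+) r ` span2 a b = (+) p ` span2 a b"
      by (intro disjI1 coset_span2_eq[OF two_eq_zero] p)
  qed
  then show thesis
    using that by simp
qed

lemma finite_boomerang_set:
  assumes "a \<noteq> 0" "b \<noteq> 0" "a \<noteq> b"
  shows "finite (B a b)"
  using boomerang_set_subset_two_cosets[OF assms] by (metis finite_Un finite_imageI finite_span2 finite_subset)

lemma card_boomerang_set_le_8:
  assumes "a \<noteq> 0" "b \<noteq> 0" "a \<noteq> b"
  shows "card (B a b) \<le> 8"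
proof -
  obtain p q where pq: "B a b \<subseteq> (+) p ` span2 a b \<union> (+) q ` span2 a b"
    using boomerang_set_subset_two_cosets[OF assms] .
  have "card (B a b) \<le> card ((+) p ` span2 a b \<union> (+) q ` span2 a b)"
    by (rule card_mono[OF _ pq]) simp
  also have "\<dots> \<le> card ((+) p ` span2 a b) + card ((+) q ` span2 a b)"
    by (rule card_Un_le)
  also have "\<dots> \<le> 8"
    using card_coset_span2_le[of p a b] card_coset_span2_le[of q a b] by simp
  finally show ?thesis .
qed

lemma card_boomerang_set_le_4:
  assumes "a \<noteq> 0" "b \<noteq> 0" "a \<noteq> b" "\<not> swapped_inv_exceptional \<gamma>"
  shows "card (B a b) \<le> 4"
proof -
  obtain p where "B a b \<subseteq> (+) p ` span2 a b"
    using boomerang_set_subset_coset[OF assms] .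
  then have "card (B a b) \<le> card ((+) p ` span2 a b)"
    by (intro card_mono) simp_all
  then show ?thesis
    using card_coset_span2_le[of p a b] by simp
qed

lemma span2_cube_root_of_unity:
  fixes \<alpha> \<omega> :: 'a
  assumes "\<omega>^2 + \<omega> + 1 = 0"
  shows "\<alpha>^2 + \<alpha> * (\<alpha> * \<omega>) + (\<alpha> * \<omega>)^2 = 0"
    and "\<alpha> * (\<alpha> * \<omega>) * (\<alpha> + \<alpha> * \<omega>) = \<alpha>^3"
    and "v \<in> span2 \<alpha> (\<alpha> * \<omega>) \<Longrightarrow> v = 0 \<or> v^3 = \<alpha>^3"
    and "\<alpha> \<noteq> 0 \<Longrightarrow> \<alpha> * \<omega> \<noteq> 0 \<and> \<alpha> \<noteq> \<alpha> * \<omega>"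
proof -
  have "\<alpha>^2 + \<alpha> * (\<alpha> * \<omega>) + (\<alpha> * \<omega>)^2 = \<alpha>^2 * (\<omega>^2 + \<omega> + 1)"
    by (simp add: char_two_simps)
  then show "\<alpha>^2 + \<alpha> * (\<alpha> * \<omega>) + (\<alpha> * \<omega>)^2 = 0"
    using assms by simp
  have "\<alpha> * (\<alpha> * \<omega>) * (\<alpha> + \<alpha> * \<omega>) = \<alpha>^3 + \<alpha>^3 * (\<omega>^2 + \<omega> + 1)"
    by (simp add: char_two_simps)
  then show "\<alpha> * (\<alpha> * \<omega>) * (\<alpha> + \<alpha> * \<omega>) = \<alpha>^3"
    using assms by simp
  have "(\<alpha> * \<omega>)^3 = \<alpha>^3 + \<alpha>^3 * (\<omega> + 1) * (\<omega>^2 + \<omega> + 1)"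
    "(\<alpha> + \<alpha> * \<omega>)^3 = \<alpha>^3 + \<alpha>^3 * \<omega> * (\<omega>^2 + \<omega> + 1)"
    by (simp_all add: char_two_simps)
  then show "v \<in> span2 \<alpha> (\<alpha> * \<omega>) \<Longrightarrow> v = 0 \<or> v^3 = \<alpha>^3"
    using assms by (auto simp: span2_def)
  have "\<omega> \<noteq> 0" "\<omega> \<noteq> 1"
    using assms by auto
  then show "\<alpha> \<noteq> 0 \<Longrightarrow> \<alpha> * \<omega> \<noteq> 0 \<and> \<alpha> \<noteq> \<alpha> * \<omega>"
    by auto
qed

lemma separated_pair_if_cubic_x3_x_1:
  assumes "\<gamma>^3 + \<gamma> + 1 = 0"
  shows "\<exists>a b p q. a \<noteq> 0 \<and> b \<noteq> 0 \<and> a \<noteq> b \<and> p \<in> B a b \<and> q \<in> B a b \<and> p + q \<notin> span2 a b"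
proof -
  have "\<gamma>^2 + \<gamma> + 1 \<noteq> 0"
  proof
    assume "\<gamma>^2 + \<gamma> + 1 = 0"
    moreover have "\<gamma>^3 + \<gamma> + 1 = \<gamma> * (\<gamma>^2 + \<gamma> + 1) + (\<gamma>^2 + 1)"
      by (simp add: char_two_simps)
    ultimately show False
      using assms by simp
  qed
  moreover have "\<gamma> = 1 + \<gamma>^2 \<longleftrightarrow> \<gamma>^2 + \<gamma> + 1 = 0"
    by (rule eq_iff_eq_if_add_eq) (simp add: ac_simps)
  ultimately have span: "\<gamma> \<notin> span2 1 (\<gamma>^2)"
    by (auto simp: span2_def)
  have "(\<gamma>^2)^2 + \<gamma>^2 = \<gamma> + \<gamma> * (\<gamma>^3 + \<gamma> + 1)"
    by (simp add: char_two_simps)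
  then have "0 \<in> B 1 (\<gamma>^2)"
    using assms span by (simp add: zero_mem_boomerang_set_one_iff)
  moreover have "\<gamma> * ((\<gamma> + \<gamma>^2)^2 + (\<gamma> + \<gamma>^2)) = \<gamma> + 1 + (\<gamma>^2 + 1) * (\<gamma>^3 + \<gamma> + 1)"
    by (simp add: char_two_simps)
  then have "\<gamma> \<in> B 1 (\<gamma>^2)"
    using assms span by (simp add: gamma_mem_boomerang_set_one_iff)
  ultimately show ?thesis
    using span by (intro exI[of _ 1] exI[of _ "\<gamma>^2"] exI[of _ 0] exI[of _ \<gamma>]) auto
qed

lemma separated_pair_if_cubic_x3_x2_1:
  assumes "\<gamma>^3 + \<gamma>^2 + 1 = 0"
  shows "\<exists>a b p q. a \<noteq> 0 \<and> b \<noteq> 0 \<and> a \<noteq> b \<and> p \<in> B a b \<and> q \<in> B a b \<and> p + q \<notin> span2 a b"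
proof -
  have "\<gamma>^2 + \<gamma> + 1 \<noteq> 0"
  proof
    assume "\<gamma>^2 + \<gamma> + 1 = 0"
    moreover have "\<gamma>^3 + \<gamma>^2 + 1 = \<gamma> * (\<gamma>^2 + \<gamma> + 1) + (\<gamma> + 1)"
      by (simp add: char_two_simps)
    ultimately show False
      using assms by simp
  qed
  moreover have "1 = \<gamma> + \<gamma>^2 \<longleftrightarrow> \<gamma>^2 + \<gamma> + 1 = 0"
    by (rule eq_iff_eq_if_add_eq) (simp add: ac_simps)
  ultimately have span: "1 \<notin> span2 \<gamma> (\<gamma>^2)"
    by (auto simp: span2_def)
  have "(\<gamma>^2)^2 + \<gamma> * \<gamma>^2 = \<gamma> + \<gamma> * (\<gamma>^3 + \<gamma>^2 + 1)"
    by (simp add: char_two_simps)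
  then have "0 \<in> B \<gamma> (\<gamma>^2)"
    using assms span by (simp add: zero_mem_boomerang_set_gamma_iff)
  moreover have "(1 + \<gamma>^2)^2 + \<gamma> * (1 + \<gamma>^2) = \<gamma>^2 * (\<gamma> + 1) + (\<gamma> + 1) * (\<gamma>^3 + \<gamma>^2 + 1)"
    by (simp add: char_two_simps)
  then have "1 \<in> B \<gamma> (\<gamma>^2)"
    using assms span by (simp add: one_mem_boomerang_set_gamma_iff)
  ultimately show ?thesis
    using span by (intro exI[of _ \<gamma>] exI[of _ "\<gamma>^2"] exI[of _ 0] exI[of _ 1]) auto
qed

lemma separated_pair_if_cube_eq_gamma_add_1:
  fixes \<alpha> \<omega> :: 'a
  assumes \<omega>: "\<omega>^2 + \<omega> + 1 = 0" and \<alpha>: "\<alpha>^3 = \<gamma> + 1"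
  shows "\<exists>a b p q. a \<noteq> 0 \<and> b \<noteq> 0 \<and> a \<noteq> b \<and> p \<in> B a b \<and> q \<in> B a b \<and> p + q \<notin> span2 a b"
proof (cases "\<gamma> \<in> span2 \<alpha> (\<alpha> * \<omega>)")
  case True
  then have "\<gamma>^3 = \<gamma> + 1"
    using span2_cube_root_of_unity(3)[OF \<omega> True] \<alpha> by auto
  then have "\<gamma>^3 + \<gamma> + 1 = 0"
    by (simp add: char_two_simps)
  then show ?thesis
    by (rule separated_pair_if_cubic_x3_x_1)
next
  case False
  note span = span2_cube_root_of_unity[OF \<omega>, where \<alpha> = \<alpha>]
  have "\<alpha> \<noteq> 0"
    using \<alpha> by auto
  have "1 \<notin> span2 \<alpha> (\<alpha> * \<omega>)"
    using span(3)[where v = 1] \<alpha> by auto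
  moreover have "1 + \<gamma> \<notin> span2 \<alpha> (\<alpha> * \<omega>)"
  proof
    assume "1 + \<gamma> \<in> span2 \<alpha> (\<alpha> * \<omega>)"
    then have "(1 + \<gamma>)^3 = 1 + \<gamma>"
      using span(3) \<alpha> by (fastforce simp: add.commute)
    moreover have "(1 + \<gamma>)^3 = (1 + \<gamma>) + (1 + \<gamma>) * \<gamma>^2"
      by (simp add: char_two_simps)
    ultimately show False
      by simp
  qed
  moreover have "0 \<in> B \<alpha> (\<alpha> * \<omega>)"
    using calculation False \<open>\<alpha> \<noteq> 0\<close> span by (simp add: zero_mem_boomerang_set_iff)
  moreover have "1 \<in> B \<alpha> (\<alpha> * \<omega>)"
    using calculation \<open>\<alpha> \<noteq> 0\<close> span \<alpha> by (simp add: one_mem_boomerang_set_iff)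
  ultimately show ?thesis
    using \<open>\<alpha> \<noteq> 0\<close> span(4)
    by (intro exI[of _ \<alpha>] exI[of _ "\<alpha> * \<omega>"] exI[of _ 0] exI[of _ 1]) auto
qed

lemma separated_pair_if_cube_eq_gamma_cube_add_square:
  fixes \<alpha> \<omega> :: 'a
  assumes \<omega>: "\<omega>^2 + \<omega> + 1 = 0" and \<alpha>: "\<alpha>^3 = \<gamma>^3 + \<gamma>^2" "\<alpha>^4 \<noteq> \<alpha>"
  shows "\<exists>a b p q. a \<noteq> 0 \<and> b \<noteq> 0 \<and> a \<noteq> b \<and> p \<in> B a b \<and> q \<in> B a b \<and> p + q \<notin> span2 a b"
proof -
  note span = span2_cube_root_of_unity[OF \<omega>, where \<alpha> = \<alpha>]
  have "\<alpha>^4 = \<alpha> * \<alpha>^3"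
    by (simp add: eval_nat_numeral)
  then have "\<alpha> \<noteq> 0" "\<alpha>^3 \<noteq> 1"
    using \<alpha>(2) by auto
  have "1 \<notin> span2 \<alpha> (\<alpha> * \<omega>)"
    using span(3)[where v = 1] \<open>\<alpha>^3 \<noteq> 1\<close> by auto
  moreover have "\<gamma> \<notin> span2 \<alpha> (\<alpha> * \<omega>)"
    using span(3)[where v = \<gamma>] \<alpha>(1) by auto
  moreover have "1 + \<gamma> \<notin> span2 \<alpha> (\<alpha> * \<omega>)"
  proof
    assume "1 + \<gamma> \<in> span2 \<alpha> (\<alpha> * \<omega>)"
    then have "(1 + \<gamma>)^3 = \<gamma>^3 + \<gamma>^2"
      using span(3) \<alpha>(1) by (fastforce simp: add.commute)
    moreover have "(1 + \<gamma>)^3 = (\<gamma>^3 + \<gamma>^2) + (1 + \<gamma>)"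
      by (simp add: char_two_simps)
    ultimately show False
      by simp
  qed
  moreover have "0 \<in> B \<alpha> (\<alpha> * \<omega>)"
    using calculation \<open>\<alpha> \<noteq> 0\<close> span by (simp add: zero_mem_boomerang_set_iff)
  moreover have "(\<gamma> + 1) * \<gamma>^2 = \<gamma>^3 + \<gamma>^2"
    by (simp add: char_two_simps)
  then have "\<gamma> \<in> B \<alpha> (\<alpha> * \<omega>)"
    using calculation \<open>\<alpha> \<noteq> 0\<close> span \<alpha>(1) by (simp add: gamma_mem_boomerang_set_iff)
  ultimately show ?thesis
    using \<open>\<alpha> \<noteq> 0\<close> span(4)
    by (intro exI[of _ \<alpha>] exI[of _ "\<alpha> * \<omega>"] exI[of _ 0] exI[of _ \<gamma>]) auto
qed

lemma separated_pair_if_exceptional: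
  assumes "swapped_inv_exceptional \<gamma>"
  shows "\<exists>a b p q. a \<noteq> 0 \<and> b \<noteq> 0 \<and> a \<noteq> b \<and> p \<in> B a b \<and> q \<in> B a b \<and> p + q \<notin> span2 a b"
  using assms unfolding swapped_inv_exceptional_def
proof (elim disjE conjE exE)
  fix \<omega> :: 'a
  assume \<omega>: "\<omega>^2 + \<omega> + 1 = 0"
  {
    assume "\<gamma> + 1 \<in> cubes_C"
    then obtain \<alpha> where "\<alpha>^3 = \<gamma> + 1"
      unfolding cubes_C_def by auto
    then show ?thesis
      by (rule separated_pair_if_cube_eq_gamma_add_1[OF \<omega>])
  next
    assume "\<gamma>^3 + \<gamma>^2 \<in> cubes_C"
    then obtain \<alpha> where "\<alpha>^3 = \<gamma>^3 + \<gamma>^2" "\<alpha>^4 \<noteq> \<alpha>"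
      unfolding cubes_C_def by auto
    then show ?thesis
      by (rule separated_pair_if_cube_eq_gamma_cube_add_square[OF \<omega>])
  }
qed (blast intro: separated_pair_if_cubic_x3_x_1 separated_pair_if_cubic_x3_x2_1)+

lemma nonempty_boomerang_set_if_cube_root_of_unity:
  fixes \<omega> :: 'a
  assumes \<omega>: "\<omega>^2 + \<omega> + 1 = 0"
  shows "\<exists>a b. a \<noteq> 0 \<and> b \<noteq> 0 \<and> a \<noteq> b \<and> B a b \<noteq> {}"
proof (cases "\<gamma>^2 + \<gamma> + 1 = 0")
  case True
  then have "\<gamma> * (\<gamma> + 1) = 1"
    by (simp add: char_two_simps)
  then have "inverse \<gamma> = \<gamma> + 1" "inverse (1 + \<gamma>) = \<gamma>"
    by (simp_all add: field_simps)
  moreover have "swapped_inv \<gamma> (1 + \<gamma>) = inverse (1 + \<gamma>)"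
    by (simp add: swapped_inv_eq_inverse add_eq_iff_eq_add)
  ultimately have "0 \<in> B 1 \<gamma>"
    by (simp add: boomerang_set_def)
  then show ?thesis
    by (intro exI[of _ 1] exI[of _ \<gamma>]) auto
next
  case False
  note span = span2_cube_root_of_unity[OF \<omega>, where \<alpha> = "\<gamma> + 1"]
  have "(\<gamma> + 1)^3 = 1 + \<gamma> * (\<gamma>^2 + \<gamma> + 1)" "(\<gamma> + 1)^3 = \<gamma>^3 + (\<gamma>^2 + \<gamma> + 1)"
    by (simp_all add: char_two_simps)
  then have "1 \<notin> span2 (\<gamma> + 1) ((\<gamma> + 1) * \<omega>)" "\<gamma> \<notin> span2 (\<gamma> + 1) ((\<gamma> + 1) * \<omega>)"
    using span(3)[where v = 1] span(3)[where v = \<gamma>] False by auto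
  then have "0 \<in> B (\<gamma> + 1) ((\<gamma> + 1) * \<omega>)"
    using span by (simp add: zero_mem_boomerang_set_iff)
  then show ?thesis
    using span(4) by (intro exI[of _ "\<gamma> + 1"] exI[of _ "(\<gamma> + 1) * \<omega>"]) auto
qed

lemma nonempty_boomerang_set_if_square_add_eq_inverse:
  fixes y :: 'a
  assumes y: "y^2 + y = inverse \<gamma>"
  shows "\<exists>a b. a \<noteq> 0 \<and> b \<noteq> 0 \<and> a \<noteq> b \<and> B a b \<noteq> {}"
proof -
  define u where "u = \<gamma> * y"
  have "u^2 + \<gamma> * u = \<gamma>^2 * (y^2 + y)"
    by (simp add: u_def char_two_simps)
  also have "\<dots> = \<gamma>"
    using y by (simp add: power2_eq_square)
  finally have u: "u^2 + \<gamma> * u = \<gamma>" .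
  have "u \<noteq> 0" "u \<noteq> \<gamma>" "u \<noteq> 1"
    using u by (auto simp: power2_eq_square)
  moreover have "u \<noteq> 1 + \<gamma>"
  proof
    assume "u = 1 + \<gamma>"
    moreover have "(1 + \<gamma>)^2 + \<gamma> * (1 + \<gamma>) = 1 + \<gamma>"
      by (simp add: char_two_simps)
    ultimately show False
      using u by simp
  qed
  ultimately have "1 \<notin> span2 \<gamma> u"
    by (auto simp: span2_def add_eq_iff_eq_add)
  then have "0 \<in> B \<gamma> u"
    using \<open>u \<noteq> 0\<close> \<open>u \<noteq> \<gamma>\<close> u by (simp add: zero_mem_boomerang_set_gamma_iff)
  then show ?thesis
    using \<open>u \<noteq> 0\<close> \<open>u \<noteq> \<gamma>\<close> by (intro exI[of _ \<gamma>] exI[of _ u]) auto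
qed

lemma nonempty_boomerang_set_if_square_add_eq_inverse_add_1:
  fixes y :: 'a
  assumes y: "y^2 + y = inverse \<gamma> + 1"
  shows "\<exists>a b. a \<noteq> 0 \<and> b \<noteq> 0 \<and> a \<noteq> b \<and> B a b \<noteq> {}"
proof -
  from y have y': "\<gamma> * (y^2 + y) = \<gamma> + 1"
    by (simp add: distrib_left)
  have "y \<noteq> 0" "y \<noteq> 1"
    using y by auto
  moreover have "y \<noteq> \<gamma>" "y \<noteq> \<gamma> + 1"
  proof -
    have "\<gamma> * (\<gamma>^2 + \<gamma>) = (\<gamma> + 1) + (\<gamma> + 1)^3" "\<gamma> * ((\<gamma> + 1)^2 + (\<gamma> + 1)) = \<gamma> * (\<gamma>^2 + \<gamma>)"
      by (simp_all add: char_two_simps)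
    then show "y \<noteq> \<gamma>" "y \<noteq> \<gamma> + 1"
      using y' by auto
  qed
  ultimately have "y + \<gamma> \<noteq> 0" "y + \<gamma> \<noteq> 1" "\<gamma> \<notin> span2 1 (y + \<gamma>)"
    by (auto simp: span2_def add_eq_iff_eq_add ac_simps)
  moreover have "\<gamma> * ((\<gamma> + (y + \<gamma>))^2 + (\<gamma> + (y + \<gamma>))) = \<gamma> + 1"
    using y' by (simp add: ac_simps)
  ultimately have "\<gamma> \<in> B 1 (y + \<gamma>)"
    by (simp add: gamma_mem_boomerang_set_one_iff)
  then show ?thesis
    using \<open>y + \<gamma> \<noteq> 0\<close> \<open>y + \<gamma> \<noteq> 1\<close> by (intro exI[of _ 1] exI[of _ "y + \<gamma>"]) auto
qed
theorem boomerang_uniformity_swapped_inv: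
  assumes "\<exists>a b. a \<noteq> 0 \<and> b \<noteq> 0 \<and> a \<noteq> b \<and> B a b \<noteq> {}"
  shows "boomerang_uniformity (swapped_inv \<gamma>) = (if swapped_inv_exceptional \<gamma> then 8 else 4)"
proof -
  let ?M = "if swapped_inv_exceptional \<gamma> then 8 else 4 :: nat"
  let ?S = "{boomerang_count (swapped_inv \<gamma>) a b | a b. a \<noteq> 0 \<and> b \<noteq> 0 \<and> a \<noteq> b}"
  have le: "card (B a b) \<le> ?M" if "a \<noteq> 0" "b \<noteq> 0" "a \<noteq> b" for a b
    using card_boomerang_set_le_8[OF that] card_boomerang_set_le_4[OF that] by simp
  obtain a b where ab: "a \<noteq> 0" "b \<noteq> 0" "a \<noteq> b" and "?M \<le> card (B a b)"
  proof (cases "swapped_inv_exceptional \<gamma>")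
    case True
    then obtain a b p q where "a \<noteq> 0" "b \<noteq> 0" "a \<noteq> b" "p \<in> B a b" "q \<in> B a b" "p + q \<notin> span2 a b"
      using separated_pair_if_exceptional by blast
    then show thesis
      using that card_boomerang_set_ge_8[OF two_eq_zero finite_boomerang_set] True by simp
  next
    case False
    obtain a b p where "a \<noteq> 0" "b \<noteq> 0" "a \<noteq> b" "p \<in> B a b"
      using assms by blast
    then show thesis
      using that card_boomerang_set_ge_4[OF two_eq_zero finite_boomerang_set] False by simp
  qed
  then have "?M = boomerang_count (swapped_inv \<gamma>) a b"
    using le[OF ab] by (simp add: boomerang_count_eq_card)
  then have attained: "?M \<in> ?S"
    using ab by blast
  have bounded: "k \<le> ?M" if "k \<in> ?S" for k
    using that le by (auto simp: boomerang_count_eq_card)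
  then have "?S \<subseteq> {..?M}"
    by blast
  then have "finite ?S"
    by (rule finite_subset) simp
  then show ?thesis
    unfolding boomerang_uniformity_def by (rule Max_eqI[OF _ bounded attained])
qed

end

lemma swapped_inv_exceptional_iff:
  fixes \<gamma> :: "'a::{field,finite}"
  assumes "card (UNIV :: 'a set) = 2 ^ n" "n > 0" "\<gamma> \<noteq> 0" "\<gamma> \<noteq> 1"
  shows "swapped_inv_exceptional \<gamma> \<longleftrightarrow>
    (even n \<and> {\<gamma>^3 + \<gamma>^2, \<gamma> + 1} \<inter> cubes_C \<noteq> {}) \<or> (3 dvd n \<and> \<gamma>^8 = \<gamma> \<and> \<gamma>^2 \<noteq> \<gamma>)"
proof -
  interpret swapped_inverse \<gamma>
    using two_eq_zero_if_card_power_two[OF assms(1,2)] assms(3,4) by unfold_locales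
  have "(\<exists>\<omega>::'a. \<omega>^2 + \<omega> + 1 = 0) \<longleftrightarrow> even n"
    using even_if_cube_root_of_unity cube_root_of_unity_if_even assms(1,2) by blast
  moreover have "\<gamma>^3 + \<gamma> + 1 = 0 \<or> \<gamma>^3 + \<gamma>^2 + 1 = 0 \<longleftrightarrow> 3 dvd n \<and> \<gamma>^8 = \<gamma> \<and> \<gamma>^2 \<noteq> \<gamma>"
    using F8_iff_cubic three_dvd_if_mem_F8[OF assms(1)] gamma_square_neq(2) by blast
  ultimately show ?thesis
    unfolding swapped_inv_exceptional_def by blast
qed

theorem corollary4p2:
  fixes \<gamma> :: "'a::{field, finite}" and n :: nat
  assumes "n > 0"
    and "card (UNIV :: 'a set) = 2 ^ n"
    and "\<gamma> \<noteq> 0" and "\<gamma> \<noteq> 1"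
  shows "boomerang_uniformity (swapped_inv \<gamma>) =
           (if (even n \<and> {\<gamma> ^ 3 + \<gamma> ^ 2, \<gamma> + 1} \<inter> cubes_C \<noteq> {})
               \<or> (3 dvd n \<and> \<gamma> ^ 8 = \<gamma> \<and> \<gamma> ^ 2 \<noteq> \<gamma>)
            then 8 else 4)
       \<and> (odd n \<and> \<not> 3 dvd n \<longrightarrow> boomerang_uniformity (swapped_inv \<gamma>) = 4)"
proof -
  interpret swapped_inverse \<gamma>
    using two_eq_zero_if_card_power_two[OF assms(2,1)] assms(3,4) by unfold_locales
  have "\<exists>a b. a \<noteq> 0 \<and> b \<noteq> 0 \<and> a \<noteq> b \<and> B a b \<noteq> {}"
  proof (cases "even n")
    case True
    then show ?thesis
      using cube_root_of_unity_if_even[OF assms(2,1)] nonempty_boomerang_set_if_cube_root_of_unity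
      by blast
  next
    case False
    then show ?thesis
      using artin_schreier_solvable_if_odd[OF assms(2,1)] nonempty_boomerang_set_if_square_add_eq_inverse
        nonempty_boomerang_set_if_square_add_eq_inverse_add_1 by blast
  qed
  then show ?thesis
    using boomerang_uniformity_swapped_inv swapped_inv_exceptional_iff[OF assms(2,1,3,4)]
    by simp
qed

end
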